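(* Let $(N,J,g)$ be a Kähler manifold of complex dimension $2n$ and $F:M\to N$ an immersion of a manifold $M$ of real dimension $2n$, with induced metric $g_M=F^*g$. Let $p_0\in M$ be a point without complex directions, i.e. $\cos\theta_\alpha(p_0)<1$ for all $\alpha$, and let $\{X_\alpha,Y_\alpha\}_{1\le\alpha\le n}$ be a $g_M$-orthonormal basis of $T_{p_0}M$ diagonalizing $F^*\omega$ at $p_0$, with $Z_\alpha=\frac{X_\alpha-iY_\alpha}{2}$, $Z_{\bar\alpha}=\frac{X_\alpha+iY_\alpha}{2}$. Then for all $U,V\in T^{\mathbb C}_{F(p_0)}N$, \[ Ricci^N(U,V)=\sum_{1\le\mu\le n}\frac{4}{\sin^2\theta_\mu}\,R^N\big(U,JV,dF(Z_\mu),\,JdF(Z_{\bar\mu})+i\cos\theta_\mu\, dF(Z_{\bar\mu})\big), \] where $\theta_\mu=\theta_\mu(p_0)$.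
   Context: $\omega(U,V)=g(JU,V)$ is the Kähler form of $N$. At $p\in M$, $F^*\omega$ is identified with a skew-symmetric endomorphism of $T_pM$ via $g_M(F^*\omega(X),Y)=F^*\omega(X,Y)$. A $g_M$-orthonormal basis $X_1,Y_1,\dots,X_n,Y_n$ of $T_pM$ diagonalizes $F^*\omega$ if $F^*\omega(X_\alpha)=\cos\theta_\alpha Y_\alpha$ and $F^*\omega(Y_\alpha)=-\cos\theta_\alpha X_\alpha$ with $1\ge\cos\theta_1\ge\dots\ge\cos\theta_n\ge 0$; the angles $\theta_\alpha\in[0,\pi/2]$ are the Kähler angles of $F$ at $p$. A complex direction at $p$ is a real 2-plane $P\subset T_pM$ with $J\,dF(P)=dF(P)$; $p$ has no complex directions iff $\cos\theta_\alpha(p)<1$ for all $\alpha$. Curvature conventions: $R^N(U,V)W=-\nabla_U\nabla_VW+\nabla_V\nabla_UW+\nabla_{[U,V]}W$, $R^N(U,V,W,Z)=g(R^N(U,V)W,Z)$; $Ricci^N$ is the Ricci tensor of $N$. All tensors ($g$, $R^N$, $Ricci^N$, $dF$, $J$) are extended complex-(multi)linearly to complexified tangent spaces. *)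

theory Defs
  imports "HOL-Analysis.Analysis"
begin

text \<open>Pointwise (linear-algebraic) model.  The real tangent space T_{F(p0)}N is a
 Euclidean space 'v with g = inner; T_{p0}M is a Euclidean space 'm (only its vector
 space structure is used); dF is the differential of F at p0.
 Complexified vectors are represented as pairs (real part, imaginary part).\<close>

type_synonym 'v cvec = "'v \<times> 'v"

definition cpart :: "bool \<Rightarrow> 'v cvec \<Rightarrow> 'v" where
  "cpart b u = (if b then snd u else fst u)"

definition iw :: "bool \<Rightarrow> complex" where
  "iw b = (if b then \<i> else 1)"

definition cmap :: "('a \<Rightarrow> 'b) \<Rightarrow> 'a cvec \<Rightarrow> 'b cvec" where
  "cmap f u = (f (fst u), f (snd u))"

definition cscale :: "complex \<Rightarrow> 'v::real_vector cvec \<Rightarrow> 'v cvec" where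
  "cscale z u = (Re z *\<^sub>R fst u - Im z *\<^sub>R snd u, Re z *\<^sub>R snd u + Im z *\<^sub>R fst u)"

definition cext2 :: "('v \<Rightarrow> 'v \<Rightarrow> real) \<Rightarrow> 'v cvec \<Rightarrow> 'v cvec \<Rightarrow> complex" where
  "cext2 B U V = (\<Sum>a\<in>UNIV. \<Sum>b\<in>UNIV. iw a * iw b * complex_of_real (B (cpart a U) (cpart b V)))"

definition cext4 :: "('v \<Rightarrow> 'v \<Rightarrow> 'v \<Rightarrow> 'v \<Rightarrow> real) \<Rightarrow> 'v cvec \<Rightarrow> 'v cvec \<Rightarrow> 'v cvec \<Rightarrow> 'v cvec \<Rightarrow> complex" where
  "cext4 R U V W Z = (\<Sum>a\<in>UNIV. \<Sum>b\<in>UNIV. \<Sum>c\<in>UNIV. \<Sum>d\<in>UNIV.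
      iw a * iw b * iw c * iw d *
      complex_of_real (R (cpart a U) (cpart b V) (cpart c W) (cpart d Z)))"

definition orth_complex_structure :: "('v::real_inner \<Rightarrow> 'v) \<Rightarrow> bool" where
  "orth_complex_structure J \<longleftrightarrow> linear J \<and> (\<forall>u. J (J u) = - u) \<and>
     (\<forall>u v. inner (J u) (J v) = inner u v)"

definition multilinear4 :: "('v::real_vector \<Rightarrow> 'v \<Rightarrow> 'v \<Rightarrow> 'v \<Rightarrow> real) \<Rightarrow> bool" where
  "multilinear4 R \<longleftrightarrow>
     (\<forall>v w z. linear (\<lambda>u. R u v w z)) \<and> (\<forall>u w z. linear (\<lambda>v. R u v w z)) \<and>
     (\<forall>u v z. linear (\<lambda>w. R u v w z)) \<and> (\<forall>u v w. linear (\<lambda>z. R u v w z))"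

text \<open>Pointwise content of the curvature tensor R^N(U,V,W,Z) = g(R^N(U,V)W,Z) of a
 Kaehler manifold: an algebraic curvature tensor commuting with J (nabla J = 0).\<close>
definition kaehler_curvature :: "('v::real_inner \<Rightarrow> 'v) \<Rightarrow> ('v \<Rightarrow> 'v \<Rightarrow> 'v \<Rightarrow> 'v \<Rightarrow> real) \<Rightarrow> bool" where
  "kaehler_curvature J R \<longleftrightarrow> multilinear4 R \<and>
     (\<forall>x y z w. R x y z w = - R y x z w) \<and>
     (\<forall>x y z w. R x y z w = - R x y w z) \<and>
     (\<forall>x y z w. R x y z w = R z w x y) \<and>
     (\<forall>x y z w. R x y z w + R y z x w + R z x y w = 0) \<and>
     (\<forall>x y z w. R x y (J z) (J w) = R x y z w)"

text \<open>Ricci tensor.  With the paper's convention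
 R(U,V)W = -nabla_U nabla_V W + nabla_V nabla_U W + nabla_[U,V] W, one has
 Ricci(U,V) = sum_i R(U,e_i,V,e_i) for any g-orthonormal basis e_i.\<close>
definition ricci :: "('v::euclidean_space \<Rightarrow> 'v \<Rightarrow> 'v \<Rightarrow> 'v \<Rightarrow> real) \<Rightarrow> 'v \<Rightarrow> 'v \<Rightarrow> real" where
  "ricci R u v = (\<Sum>e\<in>Basis. R u e v e)"

definition pull_metric :: "('m \<Rightarrow> 'v::real_inner) \<Rightarrow> 'm \<Rightarrow> 'm \<Rightarrow> real" where
  "pull_metric dF X Y = inner (dF X) (dF Y)"

definition pull_kform :: "('v::real_inner \<Rightarrow> 'v) \<Rightarrow> ('m \<Rightarrow> 'v) \<Rightarrow> 'm \<Rightarrow> 'm \<Rightarrow> real" where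
  "pull_kform J dF X Y = inner (J (dF X)) (dF Y)"

definition zvec :: "'m::real_vector \<Rightarrow> 'm \<Rightarrow> 'm cvec" where
  "zvec X Y = ((1/2) *\<^sub>R X, - ((1/2) *\<^sub>R Y))"

definition zbvec :: "'m::real_vector \<Rightarrow> 'm \<Rightarrow> 'm cvec" where
  "zbvec X Y = ((1/2) *\<^sub>R X, (1/2) *\<^sub>R Y)"

definition diagonalizing_basis ::
  "('v::real_inner \<Rightarrow> 'v) \<Rightarrow> ('m::euclidean_space \<Rightarrow> 'v) \<Rightarrow> nat \<Rightarrow> (nat \<Rightarrow> 'm) \<Rightarrow> (nat \<Rightarrow> 'm) \<Rightarrow> (nat \<Rightarrow> real) \<Rightarrow> bool" where
  "diagonalizing_basis J dF n X Y \<theta> \<longleftrightarrow>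
     (\<forall>a\<in>{1..n}. \<forall>b\<in>{1..n}.
        pull_metric dF (X a) (X b) = (if a = b then 1 else 0) \<and>
        pull_metric dF (Y a) (Y b) = (if a = b then 1 else 0) \<and>
        pull_metric dF (X a) (Y b) = 0) \<and>
     span ((X ` {1..n}) \<union> (Y ` {1..n})) = UNIV \<and>
     (\<forall>a\<in>{1..n}. \<forall>W. pull_kform J dF (X a) W = cos (\<theta> a) * pull_metric dF (Y a) W) \<and>
     (\<forall>a\<in>{1..n}. \<forall>W. pull_kform J dF (Y a) W = - cos (\<theta> a) * pull_metric dF (X a) W) \<and>
     (\<forall>a\<in>{1..n}. 0 \<le> \<theta> a \<and> \<theta> a \<le> pi / 2) \<and>
     (\<forall>a\<in>{1..n}. \<forall>b\<in>{1..n}. a \<le> b \<longrightarrow> cos (\<theta> b) \<le> cos (\<theta> a))"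

end

(*
  By the first Bianchi
  identity and J-invariance, R(u,Jv,f,Jf) = R(u,Jf,v,Jf) + R(u,f,v,f); summing over a unitary
  frame h_k (orthonormal with J h_k orthogonal to every h_l) and its J-image therefore gives
  Ricci(u,v) = sum_k R(u,Jv,h_k,Jh_k).  At p0 such a frame is x_a = dF X_a together with
  w_a = (dF Y_a - cos theta_a J dF X_a) / sin theta_a, which exists exactly because there are
  no complex directions (sin theta_a > 0).  Expanding the complex expression of the theorem,
  4 R(u,Jv,Z_a, J Zbar_a + i cos theta_a Zbar_a)
    = R(x_a,Jx_a) + R(y_a,Jy_a) - 2 cos theta_a R(x_a,y_a)
    = sin^2 theta_a (R(x_a,Jx_a) + R(w_a,Jw_a))
  (with u, Jv in the first two slots), and the identity for complex U, V follows by complex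
  multilinearity.
*)

theory Submission
  imports Defs
begin

definition orthonormal_on :: "'i set \<Rightarrow> ('i \<Rightarrow> 'v::real_inner) \<Rightarrow> bool" where
  "orthonormal_on I f \<longleftrightarrow> (\<forall>i\<in>I. \<forall>j\<in>I. f i \<bullet> f j = (if i = j then 1 else 0))"

lemma sin_gt_zero_if_cos_lt_1:
  assumes "0 \<le> \<theta>" "\<theta> \<le> pi / 2" "cos \<theta> < 1"
  shows "0 < sin \<theta>"
proof -
  have "\<theta> \<noteq> 0"
    using assms(3) by auto
  with assms(1,2) show ?thesis
    by (intro sin_gt_zero) auto
qed

lemma orthonormal_on_expansion:
  fixes f :: "'i \<Rightarrow> 'v::euclidean_space"
  assumes "finite I" "card I = DIM('v)" "orthonormal_on I f"
  shows "(\<Sum>i\<in>I. (x \<bullet> f i) *\<^sub>R f i) = x"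
proof -
  have inj: "inj_on f I"
    using assms(3) unfolding orthonormal_on_def by (metis inj_onI zero_neq_one)
  have orth: "pairwise orthogonal (f ` I)"
    using assms(3) unfolding orthonormal_on_def pairwise_def orthogonal_def by auto
  have unit: "norm b = 1" if "b \<in> f ` I" for b
    using assms(3) that unfolding orthonormal_on_def by (auto simp: norm_eq_1)
  have "independent (f ` I)"
    using pairwise_orthogonal_independent[OF orth] unit by force
  moreover have "card (f ` I) = dim (UNIV :: 'v set)"
    using card_image[OF inj] assms(2) by simp
  ultimately have "x \<in> span (f ` I)"
    using card_eq_dim[of "f ` I" UNIV] assms(1) by auto
  then have "(\<Sum>b\<in>f ` I. (x \<bullet> b) *\<^sub>R b) = x"
    using orthonormal_basis_expand[OF orth unit] assms(1) by blast
  then show ?thesis by (simp add: sum.reindex[OF inj])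
qed

lemma sum_bilinear_orthonormal_on:
  fixes f :: "'i \<Rightarrow> 'v::euclidean_space" and Q :: "'v \<Rightarrow> 'v \<Rightarrow> real"
  assumes fin: "finite I" and card: "card I = DIM('v)" and on: "orthonormal_on I f"
    and Q: "bilinear Q"
  shows "(\<Sum>i\<in>I. Q (f i) (f i)) = (\<Sum>e\<in>Basis. Q e e)"
proof -
  have "Q e e = (\<Sum>i\<in>I. \<Sum>j\<in>I. (e \<bullet> f i) * (e \<bullet> f j) * Q (f i) (f j))" for e
  proof -
    have "Q e e = Q (\<Sum>i\<in>I. (e \<bullet> f i) *\<^sub>R f i) (\<Sum>j\<in>I. (e \<bullet> f j) *\<^sub>R f j)"
      using orthonormal_on_expansion[OF fin card on] by simp
    then show ?thesis
      by (simp add: bilinear_sum[OF Q] sum.cartesian_product bilinear_lmul[OF Q]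
          bilinear_rmul[OF Q] mult_ac)
  qed
  then have "(\<Sum>e\<in>Basis. Q e e)
      = (\<Sum>i\<in>I. \<Sum>j\<in>I. (\<Sum>e\<in>Basis. (e \<bullet> f i) * (e \<bullet> f j)) * Q (f i) (f j))"
    by (simp add: sum_distrib_right sum.swap[of _ Basis])
  also have "\<dots> = (\<Sum>i\<in>I. \<Sum>j\<in>I. (f i \<bullet> f j) * Q (f i) (f j))"
    by (simp add: euclidean_inner[of "f _" "f _"] inner_commute)
  also have "\<dots> = (\<Sum>i\<in>I. \<Sum>j\<in>I. if i = j then Q (f i) (f i) else 0)"
    using on unfolding orthonormal_on_def by (intro sum.cong refl) auto
  also have "\<dots> = (\<Sum>i\<in>I. Q (f i) (f i))"
    using fin by simp
  finally show ?thesis by simp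
qed

lemma cmap_zvec: "linear f \<Longrightarrow> cmap f (zvec X Y) = zvec (f X) (f Y)"
  and cmap_zbvec: "linear f \<Longrightarrow> cmap f (zbvec X Y) = zbvec (f X) (f Y)"
  by (simp_all add: cmap_def zvec_def zbvec_def linear_cmul linear_neg)

lemma cpart_cmap [simp]: "cpart b (cmap f u) = f (cpart b u)"
  by (simp add: cpart_def cmap_def)

lemma cext4_eq_sum_cext2:
  "cext4 R U (cmap T V) W Z
     = (\<Sum>a\<in>UNIV. \<Sum>b\<in>UNIV. iw a * iw b * cext2 (R (cpart a U) (T (cpart b V))) W Z)"
  unfolding cext4_def cext2_def by (simp add: sum_distrib_left mult.assoc)

lemma sum_cext4_eq_cext2:
  fixes k :: "'i \<Rightarrow> complex"
  assumes "\<And>u v. (\<Sum>\<mu>\<in>M. k \<mu> * cext2 (R u (T v)) (W \<mu>) (Z \<mu>)) = complex_of_real (B u v)"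
  shows "(\<Sum>\<mu>\<in>M. k \<mu> * cext4 R U (cmap T V) (W \<mu>) (Z \<mu>)) = cext2 B U V"
proof -
  have "(\<Sum>\<mu>\<in>M. k \<mu> * cext4 R U (cmap T V) (W \<mu>) (Z \<mu>))
      = (\<Sum>a\<in>UNIV. \<Sum>b\<in>UNIV. iw a * iw b *
           (\<Sum>\<mu>\<in>M. k \<mu> * cext2 (R (cpart a U) (T (cpart b V))) (W \<mu>) (Z \<mu>)))"
    by (simp add: cext4_eq_sum_cext2 sum_distrib_left sum.swap[of _ M] mult_ac)
  also have "\<dots> = (\<Sum>a\<in>UNIV. \<Sum>b\<in>UNIV. iw a * iw b * complex_of_real (B (cpart a U) (cpart b V)))"
    by (simp only: assms)
  also have "\<dots> = cext2 B U V"
    by (simp only: cext2_def)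
  finally show ?thesis .
qed

locale kaehler_space =
  fixes J :: "'v::euclidean_space \<Rightarrow> 'v" and R :: "'v \<Rightarrow> 'v \<Rightarrow> 'v \<Rightarrow> 'v \<Rightarrow> real"
  assumes orth_complex_structure_J: "orth_complex_structure J"
    and kaehler_curvature_R: "kaehler_curvature J R"
begin

lemma linear_J: "linear J"
  using orth_complex_structure_J unfolding orth_complex_structure_def by blast

lemma J_J [simp]: "J (J u) = - u"
  using orth_complex_structure_J unfolding orth_complex_structure_def by blast

lemma inner_J_J [simp]: "J u \<bullet> J v = u \<bullet> v"
  using orth_complex_structure_J unfolding orth_complex_structure_def by blast

lemmas J_linear_simps [simp] =
  linear_add[OF linear_J] linear_diff[OF linear_J] linear_cmul[OF linear_J] linear_neg[OF linear_J]

lemma inner_J_left: "J u \<bullet> v = - (u \<bullet> J v)"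
  using inner_J_J[of u "J v"] by simp

lemma R_antisym12: "R x y z w = - R y x z w"
  and R_antisym34: "R x y z w = - R x y w z"
  and R_pair_sym: "R x y z w = R z w x y"
  and R_Bianchi: "R x y z w + R y z x w + R z x y w = 0"
  and R_J34 [simp]: "R x y (J z) (J w) = R x y z w"
  using kaehler_curvature_R unfolding kaehler_curvature_def by blast+

lemma multilinear4_R: "multilinear4 R"
  using kaehler_curvature_R unfolding kaehler_curvature_def by blast

lemma R_self34 [simp]: "R x y z z = 0"
  using R_antisym34[of x y z z] by simp

lemma bilinear_R34: "bilinear (R x y)"
  using multilinear4_R unfolding multilinear4_def bilinear_def by blast

lemma bilinear_R24: "bilinear (\<lambda>a b. R x a y b)"
  using multilinear4_R unfolding multilinear4_def bilinear_def by blast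

lemmas R34_simps [simp] =
  bilinear_ladd[OF bilinear_R34] bilinear_radd[OF bilinear_R34]
  bilinear_lsub[OF bilinear_R34] bilinear_rsub[OF bilinear_R34]
  bilinear_lmul[OF bilinear_R34] bilinear_rmul[OF bilinear_R34]
  bilinear_lneg[OF bilinear_R34] bilinear_rneg[OF bilinear_R34]

lemma R_J_Bianchi: "R u (J v) f (J f) = R u (J f) v (J f) + R u f v f"
proof -
  have "R (J v) f u (J f) = R u (J f) (J v) (J (J (- f)))"
    by (simp add: R_pair_sym[of "J v"])
  also have "\<dots> = - R u (J f) v (J f)"
    by (simp only: R_J34) simp
  finally have "R (J v) f u (J f) = - R u (J f) v (J f)" .
  moreover have "R f u (J v) (J f) = - R u f v f"
    using R_antisym12[of f u v f] by simp
  ultimately show ?thesis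
    using R_Bianchi[of u "J v" f "J f"] by linarith
qed

lemma ricci_eq_sum_unitary_frame:
  fixes h :: "'k \<Rightarrow> 'v"
  assumes fin: "finite K" and card: "2 * card K = DIM('v)" and on: "orthonormal_on K h"
    and J_orth: "\<And>k k'. k \<in> K \<Longrightarrow> k' \<in> K \<Longrightarrow> J (h k) \<bullet> h k' = 0"
  shows "ricci R u v = (\<Sum>k\<in>K. R u (J v) (h k) (J (h k)))"
proof -
  define f where "f = (\<lambda>(k, b). if b then J (h k) else h k)"
  let ?I = "K \<times> (UNIV :: bool set)"
  have fin_I: "finite ?I" and card_I: "card ?I = DIM('v)"
    using fin card by (simp_all add: card_cartesian_product)
  have on_f: "orthonormal_on ?I f"
    using on J_orth unfolding orthonormal_on_def f_def by (auto simp: inner_commute)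
  then have on_Jf: "orthonormal_on ?I (\<lambda>i. J (f i))"
    unfolding orthonormal_on_def by simp
  have "(\<Sum>i\<in>?I. R u (f i) v (f i)) = ricci R u v"
    unfolding ricci_def by (rule sum_bilinear_orthonormal_on[OF fin_I card_I on_f bilinear_R24])
  moreover have "(\<Sum>i\<in>?I. R u (J (f i)) v (J (f i))) = ricci R u v"
    unfolding ricci_def by (rule sum_bilinear_orthonormal_on[OF fin_I card_I on_Jf bilinear_R24])
  ultimately have "(\<Sum>i\<in>?I. R u (J v) (f i) (J (f i))) = 2 * ricci R u v"
    by (simp add: R_J_Bianchi sum.distrib)
  moreover have "(\<Sum>i\<in>?I. R u (J v) (f i) (J (f i))) = 2 * (\<Sum>k\<in>K. R u (J v) (h k) (J (h k)))"
    using R_antisym34[of u "J v" "J (h _)" "h _"]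
    by (simp add: sum.cartesian_product' UNIV_bool f_def sum_distrib_left)
  ultimately show ?thesis by simp
qed

lemma cext2_zvec_zbvec:
  "cext2 (R u v) (zvec x y) (cmap J (zbvec x y) + cscale (\<i> * complex_of_real c) (zbvec x y))
     = complex_of_real ((R u v x (J x) + R u v y (J y) - 2 * c * R u v x y) / 4)"
proof -
  have "R u v y x = - R u v x y"
    by (rule R_antisym34)
  moreover have "R u v y (J x) = R u v x (J y)"
    using R_J34[of u v y "J x"] R_antisym34[of u v "J y" x] by simp
  ultimately show ?thesis
    unfolding cext2_def cmap_def zvec_def zbvec_def cscale_def
    by (simp add: UNIV_bool cpart_def iw_def complex_eq_iff algebra_simps)
qed

lemma curvature_rotated_pair:
  assumes s: "s > 0" and sc: "s\<^sup>2 + c\<^sup>2 = 1" and w: "w = (1 / s) *\<^sub>R (y - c *\<^sub>R J x)"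
  shows "(R u v x (J x) + R u v y (J y) - 2 * c * R u v x y) / s\<^sup>2
    = R u v x (J x) + R u v w (J w)"
proof -
  have "R u v w (J w) = (R u v y (J y) - 2 * c * R u v x y + c\<^sup>2 * R u v x (J x)) / s\<^sup>2"
    unfolding w using R_antisym34[of u v y x] R_antisym34[of u v "J x" x]
    by (simp add: algebra_simps power2_eq_square divide_inverse)
  moreover have "c\<^sup>2 = 1 - s\<^sup>2"
    using sc by simp
  ultimately show ?thesis
    using s by (simp add: field_simps)
qed

lemma unitary_frame_kaehler_angles:
  fixes x y w :: "'a \<Rightarrow> 'v"
  assumes on_x: "orthonormal_on A x" and on_y: "orthonormal_on A y"
    and xy: "\<And>a b. a \<in> A \<Longrightarrow> b \<in> A \<Longrightarrow> x a \<bullet> y b = 0"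
    and Jxx: "\<And>a b. a \<in> A \<Longrightarrow> b \<in> A \<Longrightarrow> J (x a) \<bullet> x b = 0"
    and Jxy: "\<And>a b. a \<in> A \<Longrightarrow> b \<in> A \<Longrightarrow> J (x a) \<bullet> y b = (if a = b then c a else 0)"
    and Jyy: "\<And>a b. a \<in> A \<Longrightarrow> b \<in> A \<Longrightarrow> J (y a) \<bullet> y b = 0"
    and s: "\<And>a. a \<in> A \<Longrightarrow> s a > 0" and sc: "\<And>a. a \<in> A \<Longrightarrow> (s a)\<^sup>2 + (c a)\<^sup>2 = 1"
    and w: "\<And>a. w a = (1 / s a) *\<^sub>R (y a - c a *\<^sub>R J (x a))"
  shows "orthonormal_on (A \<times> UNIV) (\<lambda>(a, b). if b then w a else x a)"
    and "\<And>k k'. k \<in> A \<times> UNIV \<Longrightarrow> k' \<in> A \<times> UNIV \<Longrightarrow>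
      J ((\<lambda>(a, b). if b then w a else x a) k) \<bullet> (\<lambda>(a, b). if b then w a else x a) k' = 0"
proof -
  have xx: "x a \<bullet> x b = (if a = b then 1 else 0)" and yy: "y a \<bullet> y b = (if a = b then 1 else 0)"
    if "a \<in> A" "b \<in> A" for a b
    using on_x on_y that unfolding orthonormal_on_def by blast+
  have xJx: "x a \<bullet> J (x b) = 0" and yJx: "y a \<bullet> J (x b) = (if a = b then c a else 0)"
    if "a \<in> A" "b \<in> A" for a b
    using Jxx[OF that(2,1)] Jxy[OF that(2,1)] by (auto simp: inner_commute)
  have xw: "x a \<bullet> w b = 0" if "a \<in> A" "b \<in> A" for a b
    using xy[OF that] xJx[OF that] by (simp add: w inner_diff_right)
  have Jxw: "J (x a) \<bullet> w b = 0" if "a \<in> A" "b \<in> A" for a b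
    using Jxy[OF that] xx[OF that] by (simp add: w inner_diff_right)
  have Jwx: "J (w a) \<bullet> x b = 0" if "a \<in> A" "b \<in> A" for a b
    using yJx[OF that] xx[OF that]
    by (simp add: w inner_diff_left inner_add_left inner_J_left)
  have Jww: "J (w a) \<bullet> w b = 0" if "a \<in> A" "b \<in> A" for a b
    using Jyy[OF that] xy[OF that] xy[OF that(2,1)] xJx[OF that] yJx[OF that]
    by (simp add: w inner_diff_left inner_diff_right inner_add_left inner_add_right
        inner_J_left inner_commute)
  have ww: "w a \<bullet> w b = (if a = b then 1 else 0)" if "a \<in> A" "b \<in> A" for a b
  proof (cases "a = b")
    case True
    have "(s a)\<^sup>2 * (w a \<bullet> w a) = y a \<bullet> y a - 2 * c a * (y a \<bullet> J (x a)) + (c a)\<^sup>2 * (x a \<bullet> x a)"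
      using s[OF that(1)]
      by (simp add: w inner_diff_left inner_diff_right inner_commute power2_eq_square algebra_simps)
    also have "\<dots> = (s a)\<^sup>2"
      using that xx yy yJx sc[OF that(1)] by (simp add: power2_eq_square algebra_simps)
    finally show ?thesis
      using True s[OF that(1)] by simp
  next
    case False
    then show ?thesis
      using that yy xy[OF that(2,1)] xJx[OF that(2,1)] yJx[OF that] yJx[OF that(2,1)] xx[OF that]
      by (simp add: w inner_diff_left inner_diff_right inner_commute)
  qed
  show "orthonormal_on (A \<times> UNIV) (\<lambda>(a, b). if b then w a else x a)"
    unfolding orthonormal_on_def using xx ww xw by (auto simp: inner_commute)
  show "J ((\<lambda>(a, b). if b then w a else x a) k) \<bullet> (\<lambda>(a, b). if b then w a else x a) k' = 0"
    if "k \<in> A \<times> UNIV" "k' \<in> A \<times> UNIV" for k k'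
    using that Jxx Jxw Jwx Jww by auto
qed

lemma cext2_kaehler_angle_pair:
  assumes dF: "linear dF" and sin: "0 < sin \<theta>"
    and w: "w = (1 / sin \<theta>) *\<^sub>R (dF Y - cos \<theta> *\<^sub>R J (dF X))"
  shows "complex_of_real (4 / (sin \<theta>)\<^sup>2) *
      cext2 (R u v) (cmap dF (zvec X Y))
        (cmap J (cmap dF (zbvec X Y)) + cscale (\<i> * complex_of_real (cos \<theta>)) (cmap dF (zbvec X Y)))
    = complex_of_real (R u v (dF X) (J (dF X)) + R u v w (J w))"
proof -
  let ?E = "R u v (dF X) (J (dF X)) + R u v (dF Y) (J (dF Y)) - 2 * cos \<theta> * R u v (dF X) (dF Y)"
  have "4 / (sin \<theta>)\<^sup>2 * (?E / 4) = ?E / (sin \<theta>)\<^sup>2"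
    by (simp only: times_divide_times_eq mult.commute[of 4] nonzero_mult_divide_mult_cancel_right)
  also have "\<dots> = R u v (dF X) (J (dF X)) + R u v w (J w)"
    by (rule curvature_rotated_pair[OF sin _ w]) simp
  finally show ?thesis
    unfolding cmap_zvec[OF dF] cmap_zbvec[OF dF] cext2_zvec_zbvec of_real_mult[symmetric] by simp
qed

lemma ricci_eq_sum_diagonalizing_basis:
  assumes dF: "linear dF" and dim: "DIM('v) = 4 * n"
    and basis: "diagonalizing_basis J dF n X Y \<theta>"
    and sin: "\<And>a. a \<in> {1..n} \<Longrightarrow> 0 < sin (\<theta> a)"
    and w: "\<And>a. w a = (1 / sin (\<theta> a)) *\<^sub>R (dF (Y a) - cos (\<theta> a) *\<^sub>R J (dF (X a)))"
  shows "ricci R u v = (\<Sum>a=1..n. R u (J v) (dF (X a)) (J (dF (X a))) + R u (J v) (w a) (J (w a)))"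
proof -
  let ?x = "\<lambda>a. dF (X a)" and ?y = "\<lambda>a. dF (Y a)" and ?A = "{1..n}"
  have on: "orthonormal_on ?A ?x" "orthonormal_on ?A ?y"
    and xy: "\<And>a b. a \<in> ?A \<Longrightarrow> b \<in> ?A \<Longrightarrow> ?x a \<bullet> ?y b = 0"
    using basis unfolding diagonalizing_basis_def pull_metric_def orthonormal_on_def by blast+
  have Jx: "\<And>a W. a \<in> ?A \<Longrightarrow> J (?x a) \<bullet> dF W = cos (\<theta> a) * (?y a \<bullet> dF W)"
    and Jy: "\<And>a W. a \<in> ?A \<Longrightarrow> J (?y a) \<bullet> dF W = - cos (\<theta> a) * (?x a \<bullet> dF W)"
    using basis unfolding diagonalizing_basis_def pull_metric_def pull_kform_def by blast+
  have Jxx: "J (?x a) \<bullet> ?x b = 0"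
    and Jxy: "J (?x a) \<bullet> ?y b = (if a = b then cos (\<theta> a) else 0)"
    and Jyy: "J (?y a) \<bullet> ?y b = 0" if "a \<in> ?A" "b \<in> ?A" for a b
    using that Jx Jy xy[OF that] xy[OF that(2,1)] on(2)
    by (auto simp: orthonormal_on_def inner_commute)
  have frame: "orthonormal_on (?A \<times> UNIV) (\<lambda>(a, b). if b then w a else ?x a)"
    "\<And>k k'. k \<in> ?A \<times> UNIV \<Longrightarrow> k' \<in> ?A \<times> UNIV \<Longrightarrow>
      J ((\<lambda>(a, b). if b then w a else ?x a) k) \<bullet> (\<lambda>(a, b). if b then w a else ?x a) k' = 0"
    by (rule unitary_frame_kaehler_angles[OF on xy Jxx Jxy Jyy sin _ w]; simp)+
  have "2 * card (?A \<times> (UNIV :: bool set)) = DIM('v)"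
    using dim by (simp add: card_cartesian_product)
  from ricci_eq_sum_unitary_frame[OF _ this frame]
  show ?thesis
    by (simp add: sum.cartesian_product' UNIV_bool add.commute)
qed

end

theorem lemma1p1:
  fixes J :: "'v::euclidean_space \<Rightarrow> 'v"
    and R :: "'v \<Rightarrow> 'v \<Rightarrow> 'v \<Rightarrow> 'v \<Rightarrow> real"
    and dF :: "'m::euclidean_space \<Rightarrow> 'v"
    and n :: nat
    and X Y :: "nat \<Rightarrow> 'm"
    and \<theta> :: "nat \<Rightarrow> real"
    and U V :: "'v cvec"
  assumes dimM: "DIM('m) = 2 * n"
    and dimN: "DIM('v) = 4 * n"
    and J: "orth_complex_structure J"
    and R: "kaehler_curvature J R"
    and imm: "linear dF" "inj dF"
    and basis: "diagonalizing_basis J dF n X Y \<theta>"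
    and no_cplx: "\<forall>a\<in>{1..n}. cos (\<theta> a) < 1"
  shows "cext2 (ricci R) U V =
    (\<Sum>\<mu>=1..n. complex_of_real (4 / (sin (\<theta> \<mu>))\<^sup>2) *
       cext4 R U (cmap J V) (cmap dF (zvec (X \<mu>) (Y \<mu>)))
         (cmap J (cmap dF (zbvec (X \<mu>) (Y \<mu>)))
          + cscale (\<i> * complex_of_real (cos (\<theta> \<mu>))) (cmap dF (zbvec (X \<mu>) (Y \<mu>)))))"
proof -
  interpret kaehler_space J R
    using J R by unfold_locales
  define w where "w a = (1 / sin (\<theta> a)) *\<^sub>R (dF (Y a) - cos (\<theta> a) *\<^sub>R J (dF (X a)))" for a
  have sin_pos: "0 < sin (\<theta> a)" if "a \<in> {1..n}" for a
    using basis no_cplx that unfolding diagonalizing_basis_def by (auto intro: sin_gt_zero_if_cos_lt_1)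
  have "(\<Sum>\<mu>=1..n. complex_of_real (4 / (sin (\<theta> \<mu>))\<^sup>2) *
       cext2 (R u (J v)) (cmap dF (zvec (X \<mu>) (Y \<mu>)))
         (cmap J (cmap dF (zbvec (X \<mu>) (Y \<mu>)))
          + cscale (\<i> * complex_of_real (cos (\<theta> \<mu>))) (cmap dF (zbvec (X \<mu>) (Y \<mu>)))))
     = complex_of_real (ricci R u v)" for u v
    using ricci_eq_sum_diagonalizing_basis[OF imm(1) dimN basis sin_pos w_def]
      cext2_kaehler_angle_pair[OF imm(1) sin_pos w_def]
    by (simp add: of_real_sum)
  then show ?thesis
    by (rule sum_cext4_eq_cext2[symmetric])
qed

end
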